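(* Let $M=([n],\mathscr C)$ be a simple matroid. Let $B$ be the set of circuits $C\in\mathscr C$ that cannot be obtained by pasting, i.e. for which there are no circuits $C_1,C_2$ with $|C_1\cap C_2|=1$ and $C_1\triangle C_2=C$. Then $B$ is a tropical basis of $M$.
   Context: A matroid is simple if every circuit has cardinality greater than $2$. Let ${\bf TP}^{n-1}$ be the tropical projective space over $(\mathbb R\cup\{-\infty\},\max,+)$. For a circuit $C$, $V(C)$ is the set of $x\in{\bf TP}^{n-1}$ such that $\max\{x_i:i\in C\}$ is attained at least twice. For $B\subseteq\mathscr C$, set $V(B)=\bigcap_{C\in B}V(C)$. A subset $B\subseteq\mathscr C$ is a tropical basis if $V(B)=V(\mathscr C)$. $\triangle$ denotes symmetric difference. *)

theory Defs
  imports "HOL-Library.Extended_Real"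
begin

definition matroid_circuits :: "nat \<Rightarrow> nat set set \<Rightarrow> bool" where
  "matroid_circuits n \<C> \<longleftrightarrow>
     (\<forall>C\<in>\<C>. C \<subseteq> {1..n}) \<and>
     {} \<notin> \<C> \<and>
     (\<forall>C1\<in>\<C>. \<forall>C2\<in>\<C>. C1 \<subseteq> C2 \<longrightarrow> C1 = C2) \<and>
     (\<forall>C1\<in>\<C>. \<forall>C2\<in>\<C>. \<forall>e. C1 \<noteq> C2 \<and> e \<in> C1 \<inter> C2 \<longrightarrow>
         (\<exists>C3\<in>\<C>. C3 \<subseteq> (C1 \<union> C2) - {e}))"

definition simple_matroid :: "nat \<Rightarrow> nat set set \<Rightarrow> bool" where
  "simple_matroid n \<C> \<longleftrightarrow> matroid_circuits n \<C> \<and> (\<forall>C\<in>\<C>. card C > 2)"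

text \<open>Representatives of points of tropical projective space TP^{n-1} over (R \<union> {-\<infinity>}, max, +):
  vectors indexed by [n] with entries in R \<union> {-\<infinity>}, not all -\<infinity>
  (values outside [n] fixed to -\<infinity>). All sets V(.) below are invariant under
  tropical scaling, so they are determined by these representatives.\<close>
definition TP :: "nat \<Rightarrow> (nat \<Rightarrow> ereal) set" where
  "TP n = {x. (\<forall>i\<in>{1..n}. x i \<noteq> \<infinity>) \<and> (\<exists>i\<in>{1..n}. x i \<noteq> -\<infinity>) \<and>
             (\<forall>i. i \<notin> {1..n} \<longrightarrow> x i = -\<infinity>)}"

definition Vc :: "nat \<Rightarrow> nat set \<Rightarrow> (nat \<Rightarrow> ereal) set" where
  "Vc n C = {x \<in> TP n. \<exists>i\<in>C. \<exists>j\<in>C. i \<noteq> j \<and> x i = Max (x ` C) \<and> x j = Max (x ` C)}"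

definition VB :: "nat \<Rightarrow> nat set set \<Rightarrow> (nat \<Rightarrow> ereal) set" where
  "VB n B = TP n \<inter> (\<Inter>C\<in>B. Vc n C)"

definition tropical_basis :: "nat \<Rightarrow> nat set set \<Rightarrow> nat set set \<Rightarrow> bool" where
  "tropical_basis n \<C> B \<longleftrightarrow> B \<subseteq> \<C> \<and> VB n B = VB n \<C>"

end

theory Submission
  imports Defs
begin

text \<open>For a finite nonempty set, the maximum of x is attained twice iff no element is a strict
  maximum, i.e. every element is dominated by some other one. In this form the condition passes
  to a pasting C1 \<triangle> C2 with C1 \<inter> C2 = {e}: an element of C1 - {e} is dominated within C1
  either by another element of C1 - {e}, or by e, which in turn is dominated by an element of
  C2 - {e}. Since simplicity makes pasted circuits larger than both of their parts, induction on
  the cardinality propagates the condition from the circuits that are not pastings to all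
  circuits.\<close>

definition no_strict_max :: "('a \<Rightarrow> 'b::linorder) \<Rightarrow> 'a set \<Rightarrow> bool" where
  "no_strict_max x D \<longleftrightarrow> (\<forall>k\<in>D. \<exists>j\<in>D - {k}. x k \<le> x j)"

lemma max_attained_twice_iff_no_strict_max:
  fixes x :: "'a \<Rightarrow> 'b::linorder"
  assumes "finite D" "D \<noteq> {}"
  shows "(\<exists>i\<in>D. \<exists>j\<in>D. i \<noteq> j \<and> x i = Max (x ` D) \<and> x j = Max (x ` D))
           \<longleftrightarrow> no_strict_max x D"
proof
  assume "\<exists>i\<in>D. \<exists>j\<in>D. i \<noteq> j \<and> x i = Max (x ` D) \<and> x j = Max (x ` D)"
  then obtain i j where ij: "i \<in> D" "j \<in> D" "i \<noteq> j" "x i = Max (x ` D)" "x j = Max (x ` D)"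
    by blast
  show "no_strict_max x D"
    unfolding no_strict_max_def
  proof
    fix k assume "k \<in> D"
    then have "x k \<le> x i" "x k \<le> x j"
      using ij assms(1) by simp_all
    then show "\<exists>j'\<in>D - {k}. x k \<le> x j'"
      using ij(1-3) by (cases "k = i") blast+
  qed
next
  assume nsm: "no_strict_max x D"
  have "Max (x ` D) \<in> x ` D"
    using assms by simp
  then obtain i where i: "i \<in> D" "x i = Max (x ` D)"
    by auto
  then obtain j where j: "j \<in> D" "j \<noteq> i" "x i \<le> x j"
    using nsm unfolding no_strict_max_def by blast
  then have "x j = Max (x ` D)"
    using i assms(1) by (simp add: order_antisym)
  then show "\<exists>i\<in>D. \<exists>j\<in>D. i \<noteq> j \<and> x i = Max (x ` D) \<and> x j = Max (x ` D)"
    using i j by blast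
qed

lemma no_strict_max_symdiff:
  assumes AB: "A \<inter> B = {e}" and "no_strict_max x A" "no_strict_max x B"
  shows "no_strict_max x (sym_diff A B)"
proof -
  have dominated_outside_e: "\<exists>j\<in>sym_diff A B - {k}. x k \<le> x j"
    if AB: "A \<inter> B = {e}" and nsm: "no_strict_max x A" "no_strict_max x B" and k: "k \<in> A - B"
    for A B k
  proof -
    obtain j where j: "j \<in> A" "j \<noteq> k" "x k \<le> x j"
      using nsm(1) k unfolding no_strict_max_def by blast
    show ?thesis
    proof (cases "j = e")
      case False
      then show ?thesis using j AB by blast
    next
      case True
      then obtain j' where j': "j' \<in> B" "j' \<noteq> e" "x j \<le> x j'"
        using nsm(2) AB unfolding no_strict_max_def by blast
      then have "j' \<in> sym_diff A B - {k}"
        using AB k by blast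
      moreover have "x k \<le> x j'"
        using j(3) j'(3) by (rule order_trans)
      ultimately show ?thesis ..
    qed
  qed
  have BA: "B \<inter> A = {e}" using AB by blast
  show ?thesis
    unfolding no_strict_max_def
  proof
    fix k assume "k \<in> sym_diff A B"
    then consider "k \<in> A - B" | "k \<in> B - A" by blast
    then show "\<exists>j\<in>sym_diff A B - {k}. x k \<le> x j"
    proof cases
      case 1
      then show ?thesis by (rule dominated_outside_e[OF AB assms(2,3)])
    next
      case 2
      then have "\<exists>j\<in>sym_diff B A - {k}. x k \<le> x j"
        by (rule dominated_outside_e[OF BA assms(3,2)])
      then show ?thesis by (simp only: Un_commute)
    qed
  qed
qed

lemma card_symdiff_singleton_inter:
  assumes "A \<inter> B = {e}" "finite A" "finite B"
  shows "card (sym_diff A B) = (card A - 1) + (card B - 1)"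
proof -
  have "A - B = A - {e}" "B - A = B - {e}" "e \<in> A" "e \<in> B"
    using assms(1) by blast+
  moreover have "(A - B) \<inter> (B - A) = {}" by blast
  ultimately show ?thesis
    using assms(2,3) by (simp add: card_Un_disjoint)
qed

lemma pasting_induct:
  assumes fin: "\<forall>C\<in>\<C>. finite C" and big: "\<forall>C\<in>\<C>. 2 < card C"
    and unpasted: "\<And>C. C \<in> \<C> \<Longrightarrow>
       \<not> (\<exists>C1\<in>\<C>. \<exists>C2\<in>\<C>. card (C1 \<inter> C2) = 1 \<and> sym_diff C1 C2 = C) \<Longrightarrow> P C"
    and pasted: "\<And>C1 C2 e. C1 \<in> \<C> \<Longrightarrow> C2 \<in> \<C> \<Longrightarrow> C1 \<inter> C2 = {e} \<Longrightarrow> P C1 \<Longrightarrow> P C2 \<Longrightarrow>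
       P (sym_diff C1 C2)"
    and C: "C \<in> \<C>"
  shows "P C"
  using C
proof (induction "card C" arbitrary: C rule: less_induct)
  case less
  show ?case
  proof (cases "\<exists>C1\<in>\<C>. \<exists>C2\<in>\<C>. card (C1 \<inter> C2) = 1 \<and> sym_diff C1 C2 = C")
    case False
    then show ?thesis using unpasted less.prems by blast
  next
    case True
    then obtain C1 C2 where C1: "C1 \<in> \<C>" and C2: "C2 \<in> \<C>"
      and one_common: "card (C1 \<inter> C2) = 1" and C_eq: "sym_diff C1 C2 = C"
      by blast
    from one_common obtain e where "C1 \<inter> C2 = {e}"
      by (rule card_1_singletonE)
    note C12 = C1 C2 this
    have "card C = (card C1 - 1) + (card C2 - 1)"
      using card_symdiff_singleton_inter[OF C12(3)] fin C12 C_eq by simp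
    then have "card C1 < card C" "card C2 < card C"
      using big C12 by auto
    then have "P C1" "P C2"
      using less.hyps C12 by blast+
    then show ?thesis
      using pasted[OF C12] C_eq by simp
  qed
qed

lemma Vc_eq_no_strict_max:
  assumes "finite C" "C \<noteq> {}"
  shows "Vc n C = {x \<in> TP n. no_strict_max x C}"
  unfolding Vc_def using max_attained_twice_iff_no_strict_max[OF assms] by blast

theorem lemma3:
  fixes n :: nat and \<C> :: "nat set set"
  assumes "simple_matroid n \<C>"
  shows "tropical_basis n \<C>
           {C \<in> \<C>. \<not> (\<exists>C1\<in>\<C>. \<exists>C2\<in>\<C>. card (C1 \<inter> C2) = 1 \<and>
                                   (C1 - C2) \<union> (C2 - C1) = C)}"
proof -
  let ?B = "{C \<in> \<C>. \<not> (\<exists>C1\<in>\<C>. \<exists>C2\<in>\<C>. card (C1 \<inter> C2) = 1 \<and>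
                                   sym_diff C1 C2 = C)}"
  have fin: "\<forall>C\<in>\<C>. finite C" and big: "\<forall>C\<in>\<C>. 2 < card C"
    using assms finite_subset[of _ "{1..n}"]
    unfolding simple_matroid_def matroid_circuits_def by auto
  then have Vc_eq: "Vc n C = {x \<in> TP n. no_strict_max x C}" if "C \<in> \<C>" for C
    using that by (intro Vc_eq_no_strict_max) auto
  have "VB n ?B \<subseteq> VB n \<C>"
  proof
    fix x assume x: "x \<in> VB n ?B"
    have "no_strict_max x C" if "C \<in> \<C>" for C
    proof (rule pasting_induct[OF fin big _ _ that])
      fix D assume "D \<in> \<C>"
        "\<not> (\<exists>C1\<in>\<C>. \<exists>C2\<in>\<C>. card (C1 \<inter> C2) = 1 \<and> sym_diff C1 C2 = D)"
      then have "D \<in> ?B" by blast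
      then show "no_strict_max x D"
        using x Vc_eq unfolding VB_def by blast
    qed (rule no_strict_max_symdiff)
    then show "x \<in> VB n \<C>"
      using x Vc_eq unfolding VB_def by blast
  qed
  moreover have "VB n \<C> \<subseteq> VB n ?B"
    unfolding VB_def by blast
  ultimately show ?thesis
    unfolding tropical_basis_def by blast
qed

end
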